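(* Let $H=H_0+\sum_{i=1}^{N_c}J_iV_i$ on $N_q$ qubits with $H_0=-\sum_{n=1}^{N_q}h_nZ_n$, all $h_n>0$, and each $V_i\in\{I,X,Y,Z\}^{\otimes N_q}$. For $\vec{J}=(J_1,\dots,J_{N_c})$ in a neighbourhood of $0$ let $|E_0\rangle$ be the ground state of $H$, normalized and with phase chosen so that $\langle\vec{0}|E_0\rangle>0$, and expand it as a Taylor series $|E_0\rangle=\sum_{\vec{k}\in\mathbb{N}^{N_c}}\vec{J}^{\cdot\vec{k}}|\Psi_{\vec{k}}\rangle$. Then for every $\vec{k}\in\mathbb{N}^{N_c}$ there is a real number $C_{\vec{k}}$ with $|\Psi_{\vec{k}}\rangle=C_{\vec{k}}\,\vec{V}^{\cdot\vec{k}}|\vec{0}\rangle$.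
   Context: $|\vec{0}\rangle$ is the computational basis state with all qubits in $|0\rangle$ (the unique ground state of $H_0$). $\mathbb{N}$ includes $0$. For a vector of numbers $\vec{a}$ and $\vec{k}\in\mathbb{N}^{N_c}$, $\vec{a}^{\cdot\vec{k}}=\prod_i a_i^{k_i}$; for the vector of operators $\vec{V}=(V_1,\dots,V_{N_c})$, $\vec{V}^{\cdot\vec{k}}=V_{N_c}^{k_{N_c}}\cdots V_2^{k_2}V_1^{k_1}$ (product ordered right-to-left). *)

theory Defs
  imports "HOL-Analysis.Analysis"
begin

text \<open>Qubits are indexed 0..<Nq, couplings 0..<Nc (the paper uses 1-based indices).
  A computational basis state is a bit assignment nat => bool that is False outside
  0..<Nq; bit False = |0>, bit True = |1>.\<close>

datatype pauli = PI | PX | PY | PZ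

type_synonym bstate = "nat \<Rightarrow> bool"
type_synonym qstate = "bstate \<Rightarrow> complex"

definition bstates :: "nat \<Rightarrow> bstate set" where
  "bstates Nq = {b. \<forall>n. Nq \<le> n \<longrightarrow> \<not> b n}"

definition zero_bstate :: bstate where
  "zero_bstate = (\<lambda>n. False)"

definition ket0 :: qstate where
  "ket0 = (\<lambda>b. if b = zero_bstate then 1 else 0)"

definition supported :: "nat \<Rightarrow> qstate \<Rightarrow> bool" where
  "supported Nq \<psi> \<longleftrightarrow> (\<forall>b. b \<notin> bstates Nq \<longrightarrow> \<psi> b = 0)"

definition sq_norm_state :: "nat \<Rightarrow> qstate \<Rightarrow> real" where
  "sq_norm_state Nq \<psi> = (\<Sum>b\<in>bstates Nq. (cmod (\<psi> b))^2)"

fun pauli_flips :: "pauli \<Rightarrow> bool" where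
  "pauli_flips PI = False"
| "pauli_flips PX = True"
| "pauli_flips PY = True"
| "pauli_flips PZ = False"

text \<open>Phase picked up by a single-qubit Pauli acting on input bit:
  X|b> = |1-b>, Y|0> = i|1>, Y|1> = -i|0>, Z|0> = |0>, Z|1> = -|1>.\<close>
fun pauli_phase :: "pauli \<Rightarrow> bool \<Rightarrow> complex" where
  "pauli_phase PI _ = 1"
| "pauli_phase PX _ = 1"
| "pauli_phase PY b = (if b then - \<i> else \<i>)"
| "pauli_phase PZ b = (if b then -1 else 1)"

definition flip_bits :: "nat \<Rightarrow> (nat \<Rightarrow> pauli) \<Rightarrow> bstate \<Rightarrow> bstate" where
  "flip_bits Nq P b = (\<lambda>n. if n < Nq \<and> pauli_flips (P n) then \<not> b n else b n)"

definition pauli_op :: "nat \<Rightarrow> (nat \<Rightarrow> pauli) \<Rightarrow> qstate \<Rightarrow> qstate" where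
  "pauli_op Nq P \<psi> =
     (\<lambda>b'. (\<Prod>n<Nq. pauli_phase (P n) (flip_bits Nq P b' n)) * \<psi> (flip_bits Nq P b'))"

definition H0_op :: "nat \<Rightarrow> (nat \<Rightarrow> real) \<Rightarrow> qstate \<Rightarrow> qstate" where
  "H0_op Nq h \<psi> = (\<lambda>b. - of_real (\<Sum>n<Nq. h n * (if b n then -1 else 1)) * \<psi> b)"

definition ham_op :: "nat \<Rightarrow> nat \<Rightarrow> (nat \<Rightarrow> real) \<Rightarrow> (nat \<Rightarrow> nat \<Rightarrow> pauli)
    \<Rightarrow> (nat \<Rightarrow> real) \<Rightarrow> qstate \<Rightarrow> qstate" where
  "ham_op Nq Nc h V J \<psi> =
     (\<lambda>b. H0_op Nq h \<psi> b + (\<Sum>i<Nc. of_real (J i) * pauli_op Nq (V i) \<psi> b))"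

definition is_ground_state :: "nat \<Rightarrow> (qstate \<Rightarrow> qstate) \<Rightarrow> qstate \<Rightarrow> bool" where
  "is_ground_state Nq H \<psi> \<longleftrightarrow>
     supported Nq \<psi> \<and> sq_norm_state Nq \<psi> = 1 \<and>
     (\<exists>E::real. H \<psi> = (\<lambda>b. of_real E * \<psi> b) \<and>
        (\<forall>(\<mu>::complex) \<phi>. supported Nq \<phi> \<and> \<phi> \<noteq> (\<lambda>_. 0) \<and> H \<phi> = (\<lambda>b. \<mu> * \<phi> b)
              \<longrightarrow> E \<le> Re \<mu>))"

definition multi_indices :: "nat \<Rightarrow> (nat \<Rightarrow> nat) set" where
  "multi_indices Nc = {k. \<forall>i. Nc \<le> i \<longrightarrow> k i = 0}"

definition mono_pow :: "nat \<Rightarrow> (nat \<Rightarrow> real) \<Rightarrow> (nat \<Rightarrow> nat) \<Rightarrow> real" where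
  "mono_pow Nc J k = (\<Prod>i<Nc. J i ^ k i)"

text \<open>vpow Nq V k m psi = V_(m-1)^(k_(m-1)) ... V_1^(k_1) V_0^(k_0) psi
  (rightmost factor applied first).\<close>
primrec vpow :: "nat \<Rightarrow> (nat \<Rightarrow> nat \<Rightarrow> pauli) \<Rightarrow> (nat \<Rightarrow> nat) \<Rightarrow> nat \<Rightarrow> qstate \<Rightarrow> qstate" where
  "vpow Nq V k 0 \<psi> = \<psi>"
| "vpow Nq V k (Suc m) \<psi> = (pauli_op Nq (V m) ^^ k m) (vpow Nq V k m \<psi>)"

end

theory Submission
  imports Defs "HOL-Complex_Analysis.Cauchy_Integral_Formula"
begin

(* Since H_0 has gap 2 min h above |0...0>, an eigenvector of H whose eigenvalue
   lies below that gap is determined by its |0...0> amplitude (a diagonal dominance estimate);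
   as the Taylor expansion keeps this amplitude of E0(J) near 1, for small J the state E0(J)
   is the unique normalised ground state with positive real |0...0> amplitude.
   Conjugating H(J) by Z_n, or by complex conjugation, gives H(J') where J' flips the signs of
   the J_i whose V_i anticommutes with Z_n, resp. contains an odd number of Y's. Uniqueness
   turns this into Z_n E0(J) = E0(J') and conj E0(J) = E0(J'), and comparing Taylor
   coefficients, Psi_k is a joint eigenvector of all Z_n and of conjugation with exactly the
   eigenvalues of V^k|0...0>. The Z_n eigenvalues pin down a single basis state, so Psi_k is a
   multiple of V^k|0...0>, and conjugation makes the factor real. *)

section \<open>Uniqueness of power series coefficients\<close>

lemma powser_coeffs_eq_0:
  fixes a :: "nat \<Rightarrow> complex"
  assumes r: "0 < r" and zero: "\<And>t. \<bar>t\<bar> < r \<Longrightarrow> (\<lambda>n. a n * of_real t ^ n) sums 0"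
  shows "a m = 0"
proof (rule ccontr)
  assume am: "a m \<noteq> 0"
  \<comment> \<open>The series converges on the complex disc of radius r, where a nonzero coefficient
    would make the zero at 0 isolated; but the sum vanishes on the real segment.\<close>
  have "a 0 = 0"
    using zero[of 0] r by simp
  with am have "m > 0"
    by (cases m) auto
  have "conv_radius a \<ge> r"
    by (rule conv_radius_geI_ex') (use zero sums_summable in force)
  define f where "f z = (\<Sum>n. a n * z ^ n)" for z
  have f_sums: "(\<lambda>n. a n * z ^ n) sums f z" if "norm z < r" for z
  proof -
    have "summable (\<lambda>n. a n * z ^ n)"
      using that by (intro summable_in_conv_radius order.strict_trans2[OF _ \<open>conv_radius a \<ge> r\<close>]) simp
    then show ?thesis
      by (simp add: f_def summable_sums)
  qed
  have "f 0 = 0"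
    using \<open>a 0 = 0\<close> by (simp add: f_def)
  obtain s where "0 < s" and nz: "\<And>z. z \<in> cball 0 s - {0} \<Longrightarrow> f z \<noteq> 0"
  proof (rule powser_0_nonzero[where r = r and a = a and \<xi> = 0 and f = f and m = m])
    show "(\<lambda>n. a n * (z - 0) ^ n) sums f z" if "norm (z - 0) < r" for z
      using f_sums that by simp
  qed (use r am \<open>m > 0\<close> \<open>f 0 = 0\<close> in auto)
  define t where "t = min s (r / 2)"
  have "f (of_real t) = 0"
    using sums_unique2[OF f_sums zero, of t] r \<open>0 < s\<close> by (simp add: t_def)
  moreover have "of_real t \<in> cball (0 :: complex) s - {0}"
    using r \<open>0 < s\<close> by (auto simp: t_def)
  ultimately show False
    using nz by blast
qed

lemma mono_pow_Suc: "mono_pow (Suc N) J k = mono_pow N J k * J N ^ k N"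
  unfolding mono_pow_def by simp

lemma mono_pow_upd_exponent: "mono_pow N J (k(N := j)) = mono_pow N J k"
  unfolding mono_pow_def by (intro prod.cong) auto

lemma mono_pow_upd_base: "mono_pow N (J(N := t)) k = mono_pow N J k"
  unfolding mono_pow_def by (intro prod.cong) auto

lemma mono_pow_mult: "mono_pow N (\<lambda>i. s i * J i) k = mono_pow N s k * mono_pow N J k"
  unfolding mono_pow_def by (simp add: power_mult_distrib prod.distrib)

lemma multi_indices_0: "multi_indices 0 = {\<lambda>_. 0}"
  unfolding multi_indices_def by auto

lemma bij_betw_multi_indices_Suc:
  "bij_betw (\<lambda>(j, k). k(N := j)) (UNIV \<times> multi_indices N) (multi_indices (Suc N))"
  by (rule bij_betwI[where g = "\<lambda>k. (k N, k(N := 0))"]) (auto simp: multi_indices_def)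

lemma has_sum_powser_coeffs_eq_0:
  fixes a :: "nat \<Rightarrow> 'b \<Rightarrow> complex"
  assumes r: "0 < r"
    and zero: "\<And>t. \<bar>t\<bar> < r \<Longrightarrow> ((\<lambda>(j, x). of_real (t ^ j) * a j x) has_sum 0) (UNIV \<times> X)"
  shows "(a j has_sum 0) X"
proof -
  have summ: "a j' summable_on X" for j'
  proof -
    have "(\<lambda>x. of_real ((r / 2) ^ j') * a j' x) summable_on X"
      using summable_on_SigmaD1[OF has_sum_imp_summable[OF zero[of "r / 2"]], where x = j'] r
      by simp
    then show ?thesis
      using r by (simp add: summable_on_cmult_right')
  qed
  have "(\<lambda>j. infsum (a j) X * of_real t ^ j) sums 0" if "\<bar>t\<bar> < r" for t
  proof -
    have "((\<lambda>j. of_real (t ^ j) * infsum (a j) X) has_sum 0) UNIV"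
      using zero[OF that] by (rule has_sum_SigmaD) (simp add: has_sum_cmult_right summ)
    then show ?thesis
      by (auto dest: has_sum_imp_sums simp: mult.commute)
  qed
  then have "infsum (a j) X = 0"
    by (rule powser_coeffs_eq_0[OF r])
  then show ?thesis
    using summ by (metis has_sum_infsum)
qed

lemma has_sum_multi_powser_Suc:
  "((\<lambda>k. of_real (mono_pow (Suc N) (J(N := t)) k) * c k) has_sum A) (multi_indices (Suc N)) \<longleftrightarrow>
   ((\<lambda>(j, k). of_real (t ^ j) * (of_real (mono_pow N J k) * c (k(N := j)))) has_sum A)
     (UNIV \<times> multi_indices N)"
  unfolding has_sum_reindex_bij_betw[OF bij_betw_multi_indices_Suc, symmetric]
  by (simp add: case_prod_unfold mono_pow_Suc mono_pow_upd_exponent mono_pow_upd_base mult_ac)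

lemma multi_powser_coeffs_eq_0:
  fixes c :: "(nat \<Rightarrow> nat) \<Rightarrow> complex"
  assumes r: "0 < r"
    and zero: "\<And>J. \<forall>i<N. \<bar>J i\<bar> < r \<Longrightarrow>
      ((\<lambda>k. of_real (mono_pow N J k) * c k) has_sum 0) (multi_indices N)"
  shows "\<forall>k\<in>multi_indices N. c k = 0"
  using zero
proof (induction N arbitrary: c)
  case 0
  have "(c has_sum 0) {\<lambda>_. 0}"
    using "0.prems"(1)[of "\<lambda>_. 0"] r by (simp add: multi_indices_0 mono_pow_def)
  moreover have "(c has_sum c (\<lambda>_. 0)) {\<lambda>_. 0}"
    using has_sum_finite[of "{\<lambda>_. 0}" c] by simp
  ultimately show ?case
    using has_sum_unique by (fastforce simp: multi_indices_0)
next
  case (Suc N)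
  have inner_zero: "((\<lambda>k. of_real (mono_pow N J k) * c (k(N := j))) has_sum 0) (multi_indices N)"
    if J: "\<forall>i<N. \<bar>J i\<bar> < r" for J j
  proof (rule has_sum_powser_coeffs_eq_0[OF r])
    fix t :: real
    assume "\<bar>t\<bar> < r"
    with J have "\<forall>i<Suc N. \<bar>(J(N := t)) i\<bar> < r"
      by (auto simp: less_Suc_eq)
    from Suc.prems(1)[OF this]
    show "((\<lambda>(j, k). of_real (t ^ j) * (of_real (mono_pow N J k) * c (k(N := j)))) has_sum 0)
      (UNIV \<times> multi_indices N)"
      by (simp only: has_sum_multi_powser_Suc)
  qed
  show ?case
  proof
    fix k
    assume "k \<in> multi_indices (Suc N)"
    then have "k(N := 0) \<in> multi_indices N"
      by (auto simp: multi_indices_def)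
    then have "c ((k(N := 0))(N := k N)) = 0"
      using Suc.IH[of "\<lambda>k'. c (k'(N := k N))", OF inner_zero] by blast
    then show "c k = 0"
      by simp
  qed
qed

lemma multi_powser_coeffs_unique:
  fixes c d :: "(nat \<Rightarrow> nat) \<Rightarrow> complex"
  assumes r: "0 < r"
    and c: "\<And>J. \<forall>i<N. \<bar>J i\<bar> < r \<Longrightarrow>
      ((\<lambda>k. of_real (mono_pow N J k) * c k) has_sum A J) (multi_indices N)"
    and d: "\<And>J. \<forall>i<N. \<bar>J i\<bar> < r \<Longrightarrow>
      ((\<lambda>k. of_real (mono_pow N J k) * d k) has_sum A J) (multi_indices N)"
    and k: "k \<in> multi_indices N"
  shows "c k = d k"
proof -
  have "\<forall>k\<in>multi_indices N. c k - d k = 0"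
  proof (rule multi_powser_coeffs_eq_0[OF r])
    fix J :: "nat \<Rightarrow> real"
    assume J: "\<forall>i<N. \<bar>J i\<bar> < r"
    from has_sum_add[OF c[OF J] has_sum_uminusI[OF d[OF J]]]
    show "((\<lambda>k. of_real (mono_pow N J k) * (c k - d k)) has_sum 0) (multi_indices N)"
      by (simp add: right_diff_distrib)
  qed
  with k show ?thesis
    by simp
qed

lemma mono_pow_zero_base:
  assumes "k \<in> multi_indices N" "k \<noteq> (\<lambda>_. 0)"
  shows "mono_pow N (\<lambda>_. 0) k = 0"
proof -
  obtain i where "k i \<noteq> 0"
    using assms(2) by auto
  moreover from this have "i < N"
    using assms(1) by (auto simp: multi_indices_def not_less[symmetric])
  ultimately show ?thesis
    unfolding mono_pow_def by (intro prod_zero) auto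
qed

lemma multi_powser_at_zero:
  fixes c :: "(nat \<Rightarrow> nat) \<Rightarrow> complex"
  assumes "((\<lambda>k. of_real (mono_pow N (\<lambda>_. 0) k) * c k) has_sum A) (multi_indices N)"
  shows "A = c (\<lambda>_. 0)"
proof -
  have "((\<lambda>k. of_real (mono_pow N (\<lambda>_. 0) k) * c k) has_sum c (\<lambda>_. 0)) (multi_indices N)"
  proof (rule has_sum_finite_neutralI[of "{\<lambda>_. 0}"])
    show "{\<lambda>_. 0} \<subseteq> multi_indices N"
      by (simp add: multi_indices_def)
  qed (simp_all add: mono_pow_zero_base mono_pow_def[of _ _ "\<lambda>_. 0"])
  with assms show ?thesis
    by (rule has_sum_unique)
qed

lemma mono_pow_nonneg: "0 \<le> \<rho> \<Longrightarrow> 0 \<le> mono_pow N (\<lambda>_. \<rho>) k"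
  by (simp add: mono_pow_def prod_nonneg)

lemma abs_mono_pow_le:
  fixes J :: "nat \<Rightarrow> real"
  assumes k: "k \<in> multi_indices N" "k \<noteq> (\<lambda>_. 0)"
    and q: "0 \<le> q" "q \<le> 1" and \<rho>: "0 \<le> \<rho>" and J: "\<forall>i<N. \<bar>J i\<bar> \<le> q * \<rho>"
  shows "\<bar>mono_pow N J k\<bar> \<le> q * mono_pow N (\<lambda>_. \<rho>) k"
proof -
  obtain i0 where "k i0 \<noteq> 0"
    using k(2) by auto
  moreover from this have "i0 < N"
    using k(1) by (auto simp: multi_indices_def not_less[symmetric])
  ultimately have "(\<Prod>i<N. q ^ k i) = q ^ k i0 * (\<Prod>i\<in>{..<N} - {i0}. q ^ k i)"
    by (simp add: prod.remove)
  also have "\<dots> \<le> q ^ k i0"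
    using q by (intro mult_left_le prod_le_1) (auto intro: power_le_one)
  also have "\<dots> \<le> q ^ 1"
    using q \<open>k i0 \<noteq> 0\<close> by (intro power_decreasing) auto
  finally have q_pow: "(\<Prod>i<N. q ^ k i) \<le> q"
    by simp
  have "\<bar>mono_pow N J k\<bar> \<le> (\<Prod>i<N. (q * \<rho>) ^ k i)"
    unfolding mono_pow_def abs_prod power_abs by (rule prod_mono) (use J in \<open>auto intro: power_mono\<close>)
  also have "\<dots> = (\<Prod>i<N. q ^ k i) * mono_pow N (\<lambda>_. \<rho>) k"
    by (simp add: mono_pow_def power_mult_distrib prod.distrib)
  also have "\<dots> \<le> q * mono_pow N (\<lambda>_. \<rho>) k"
    by (rule mult_right_mono[OF q_pow]) (use \<rho> in \<open>simp add: mono_pow_nonneg\<close>)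
  finally show ?thesis .
qed

lemma norm_multi_powser_sub_const_le:
  fixes c :: "(nat \<Rightarrow> nat) \<Rightarrow> complex"
  assumes summ: "(\<lambda>k. of_real (mono_pow N (\<lambda>_. \<rho>) k) * c k) summable_on multi_indices N"
    and sum: "((\<lambda>k. of_real (mono_pow N J k) * c k) has_sum A) (multi_indices N)"
    and \<rho>: "0 \<le> \<rho>" and q: "0 \<le> q" "q \<le> 1" and J: "\<forall>i<N. \<bar>J i\<bar> \<le> q * \<rho>"
  shows "norm (A - c (\<lambda>_. 0)) \<le> q * (\<Sum>\<^sub>\<infinity>k\<in>multi_indices N. norm (of_real (mono_pow N (\<lambda>_. \<rho>) k) * c k))"
proof -
  define g where "g k = of_real (mono_pow N J k) * c k - (if k = (\<lambda>_. 0) then c k else 0)" for k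
  have "((\<lambda>k. if k = (\<lambda>_. 0) then c k else 0) has_sum c (\<lambda>_. 0)) (multi_indices N)"
    by (rule has_sum_finite_neutralI[of "{\<lambda>_. 0}"]) (auto simp: multi_indices_def)
  from has_sum_add[OF sum has_sum_uminusI[OF this]]
  have g_sum: "(g has_sum (A - c (\<lambda>_. 0))) (multi_indices N)"
    by (simp add: g_def[abs_def])
  have "(\<lambda>k. norm (of_real (mono_pow N (\<lambda>_. \<rho>) k) * c k)) summable_on multi_indices N"
    using summ unfolding summable_on_iff_abs_summable_on_complex .
  then have majorant: "((\<lambda>k. q * norm (of_real (mono_pow N (\<lambda>_. \<rho>) k) * c k)) has_sum
      q * (\<Sum>\<^sub>\<infinity>k\<in>multi_indices N. norm (of_real (mono_pow N (\<lambda>_. \<rho>) k) * c k))) (multi_indices N)"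
    by (intro has_sum_cmult_right has_sum_infsum)
  show ?thesis
  proof (rule norm_infsum_le[OF g_sum majorant])
    fix k
    assume k: "k \<in> multi_indices N"
    show "norm (g k) \<le> q * norm (of_real (mono_pow N (\<lambda>_. \<rho>) k) * c k)"
    proof (cases "k = (\<lambda>_. 0)")
      case True
      then show ?thesis
        using q by (simp add: g_def mono_pow_def)
    next
      case False
      then have "norm (g k) = \<bar>mono_pow N J k\<bar> * norm (c k)"
        by (simp add: g_def norm_mult)
      also have "\<dots> \<le> q * mono_pow N (\<lambda>_. \<rho>) k * norm (c k)"
        by (rule mult_right_mono[OF abs_mono_pow_le[OF k False q \<rho> J]]) simp
      finally show ?thesis
        using \<rho> by (simp add: norm_mult mono_pow_nonneg mult.assoc)
    qed
  qed
qed

section \<open>Pauli strings and the symmetries of the Hamiltonian\<close>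

definition zop :: "nat \<Rightarrow> qstate \<Rightarrow> qstate" where
  "zop n \<psi> = (\<lambda>b. (if b n then -1 else 1) * \<psi> b)"

definition cnj_state :: "qstate \<Rightarrow> qstate" where
  "cnj_state \<psi> = (\<lambda>b. cnj (\<psi> b))"

definition Z_sign :: "nat \<Rightarrow> (nat \<Rightarrow> pauli) \<Rightarrow> real" where
  "Z_sign n P = (if pauli_flips (P n) then -1 else 1)"

definition cnj_sign :: "nat \<Rightarrow> (nat \<Rightarrow> pauli) \<Rightarrow> real" where
  "cnj_sign Nq P = (\<Prod>n<Nq. if P n = PY then -1 else 1)"

definition H0_energy :: "nat \<Rightarrow> (nat \<Rightarrow> real) \<Rightarrow> bstate \<Rightarrow> real" where
  "H0_energy Nq h b = - (\<Sum>n<Nq. h n * (if b n then -1 else 1))"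

lemma abs_Z_sign [simp]: "\<bar>Z_sign n P\<bar> = 1"
  by (simp add: Z_sign_def)

lemma abs_cnj_sign [simp]: "\<bar>cnj_sign Nq P\<bar> = 1"
  unfolding cnj_sign_def abs_prod by (rule prod.neutral) auto

lemma norm_zop [simp]: "norm (zop n \<psi> b) = norm (\<psi> b)"
  by (simp add: zop_def norm_mult)

lemma zop_scale: "zop n (\<lambda>b. c * \<psi> b) = (\<lambda>b. c * zop n \<psi> b)"
  by (simp add: zop_def mult.left_commute)

lemma zop_zero_bstate [simp]: "zop n \<psi> zero_bstate = \<psi> zero_bstate"
  by (simp add: zop_def zero_bstate_def)

lemma norm_cnj_state [simp]: "norm (cnj_state \<psi> b) = norm (\<psi> b)"
  by (simp add: cnj_state_def)

lemma cnj_state_scale: "cnj_state (\<lambda>b. c * \<psi> b) = (\<lambda>b. cnj c * cnj_state \<psi> b)"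
  by (simp add: cnj_state_def)

lemma ham_op_apply:
  "ham_op Nq Nc h V J \<psi> b =
     of_real (H0_energy Nq h b) * \<psi> b + (\<Sum>i<Nc. of_real (J i) * pauli_op Nq (V i) \<psi> b)"
  unfolding ham_op_def H0_op_def H0_energy_def by simp

lemma finite_bstates: "finite (bstates Nq)"
proof (rule finite_subset)
  show "bstates Nq \<subseteq> (\<lambda>S n. n \<in> S) ` Pow {..<Nq}"
  proof
    fix b
    assume "b \<in> bstates Nq"
    then have "b = (\<lambda>n. n \<in> {n. n < Nq \<and> b n})"
      unfolding bstates_def fun_eq_iff using leI by blast
    then show "b \<in> (\<lambda>S n. n \<in> S) ` Pow {..<Nq}"
      by blast
  qed
qed simp

lemma zero_bstate_in_bstates [simp]: "zero_bstate \<in> bstates Nq"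
  by (simp add: bstates_def zero_bstate_def)

lemma flip_bits_in_bstates_iff [simp]: "flip_bits Nq P b \<in> bstates Nq \<longleftrightarrow> b \<in> bstates Nq"
  by (auto simp: bstates_def flip_bits_def split: if_splits)

lemma flip_bits_flip_bits [simp]: "flip_bits Nq P (flip_bits Nq P b) = b"
  by (auto simp: flip_bits_def)

lemma norm_pauli_phase [simp]: "norm (pauli_phase p x) = 1"
  by (cases p) auto

lemma norm_pauli_op: "norm (pauli_op Nq P \<psi> b) = norm (\<psi> (flip_bits Nq P b))"
  unfolding pauli_op_def by (simp add: norm_mult prod_norm[symmetric])

lemma supported_pauli_op: "supported Nq \<psi> \<Longrightarrow> supported Nq (pauli_op Nq P \<psi>)"
  unfolding supported_def pauli_op_def by simp

lemma pauli_op_scale: "pauli_op Nq P (\<lambda>b. c * \<psi> b) = (\<lambda>b. c * pauli_op Nq P \<psi> b)"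
  unfolding pauli_op_def by (simp add: mult_ac)

lemma pauli_op_diff:
  "pauli_op Nq P (\<lambda>b. \<psi> b - \<phi> b) = (\<lambda>b. pauli_op Nq P \<psi> b - pauli_op Nq P \<phi> b)"
  unfolding pauli_op_def by (simp add: algebra_simps)

lemma pauli_op_pauli_op [simp]: "pauli_op Nq P (pauli_op Nq P \<psi>) = \<psi>"
proof
  fix b
  have phase: "pauli_phase p (if pauli_flips p then \<not> x else x) * pauli_phase p x = 1" for p x
    by (cases p) auto
  have "(\<Prod>n<Nq. pauli_phase (P n) (flip_bits Nq P b n)) * (\<Prod>n<Nq. pauli_phase (P n) (b n)) = 1"
    unfolding prod.distrib[symmetric] by (rule prod.neutral) (auto simp: flip_bits_def phase)
  then show "pauli_op Nq P (pauli_op Nq P \<psi>) b = \<psi> b"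
    unfolding pauli_op_def by (simp add: mult.assoc[symmetric])
qed

lemma zop_pauli_op:
  "n < Nq \<Longrightarrow> zop n (pauli_op Nq P \<psi>) = (\<lambda>b. of_real (Z_sign n P) * pauli_op Nq P (zop n \<psi>) b)"
  unfolding pauli_op_def zop_def Z_sign_def by (auto simp: flip_bits_def fun_eq_iff)

lemma cnj_state_pauli_op:
  "cnj_state (pauli_op Nq P \<psi>) = (\<lambda>b. of_real (cnj_sign Nq P) * pauli_op Nq P (cnj_state \<psi>) b)"
proof
  fix b
  have cnj_phase: "cnj (pauli_phase p x) = (if p = PY then -1 else 1) * pauli_phase p x" for p x
    by (cases p) auto
  have "(\<Prod>n<Nq. (if P n = PY then -1 else 1 :: complex)) = of_real (cnj_sign Nq P)"
    unfolding cnj_sign_def of_real_prod by (intro prod.cong) auto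
  then show "cnj_state (pauli_op Nq P \<psi>) b = of_real (cnj_sign Nq P) * pauli_op Nq P (cnj_state \<psi>) b"
    unfolding cnj_state_def pauli_op_def by (simp add: cnj_phase prod.distrib mult.assoc)
qed

lemma zop_ham_op:
  assumes "n < Nq"
  shows "zop n (ham_op Nq Nc h V J \<psi>) = ham_op Nq Nc h V (\<lambda>i. Z_sign n (V i) * J i) (zop n \<psi>)"
proof
  fix b
  have "zop n (pauli_op Nq (V i) \<psi>) b = of_real (Z_sign n (V i)) * pauli_op Nq (V i) (zop n \<psi>) b" for i
    using zop_pauli_op[OF assms] by metis
  then show "zop n (ham_op Nq Nc h V J \<psi>) b = ham_op Nq Nc h V (\<lambda>i. Z_sign n (V i) * J i) (zop n \<psi>) b"
    unfolding ham_op_apply by (simp add: zop_def algebra_simps sum_distrib_left)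
qed

lemma cnj_state_ham_op:
  "cnj_state (ham_op Nq Nc h V J \<psi>) = ham_op Nq Nc h V (\<lambda>i. cnj_sign Nq (V i) * J i) (cnj_state \<psi>)"
proof
  fix b
  have "cnj (pauli_op Nq (V i) \<psi> b) = of_real (cnj_sign Nq (V i)) * pauli_op Nq (V i) (cnj_state \<psi>) b" for i
    using cnj_state_pauli_op[of Nq "V i" \<psi>] unfolding cnj_state_def by metis
  then show "cnj_state (ham_op Nq Nc h V J \<psi>) b =
      ham_op Nq Nc h V (\<lambda>i. cnj_sign Nq (V i) * J i) (cnj_state \<psi>) b"
    unfolding ham_op_apply by (simp add: cnj_state_def mult_ac)
qed

lemma ham_op_scale: "ham_op Nq Nc h V J (\<lambda>b. c * \<psi> b) = (\<lambda>b. c * ham_op Nq Nc h V J \<psi> b)"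
  unfolding ham_op_apply[abs_def] pauli_op_scale by (simp add: algebra_simps sum_distrib_left)

lemma ham_op_diff:
  "ham_op Nq Nc h V J (\<lambda>b. \<psi> b - \<phi> b) = (\<lambda>b. ham_op Nq Nc h V J \<psi> b - ham_op Nq Nc h V J \<phi> b)"
  unfolding ham_op_apply[abs_def] pauli_op_diff by (simp add: algebra_simps sum_subtractf)

lemma vpow_intertwine:
  assumes U_pauli: "\<And>i \<psi>. i < m \<Longrightarrow> U (pauli_op Nq (V i) \<psi>) = (\<lambda>b. of_real (s i) * pauli_op Nq (V i) (U \<psi>) b)"
    and U_scale: "\<And>r \<psi>. U (\<lambda>b. of_real r * \<psi> b) = (\<lambda>b. of_real r * U \<psi> b)"
  shows "U (vpow Nq V k m \<psi>) = (\<lambda>b. of_real (mono_pow m s k) * vpow Nq V k m (U \<psi>) b)"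
  using U_pauli
proof (induction m)
  case 0
  then show ?case
    by (simp add: mono_pow_def)
next
  case (Suc m)
  have pow_scale: "(pauli_op Nq P ^^ j) (\<lambda>b. c * \<phi> b) = (\<lambda>b. c * (pauli_op Nq P ^^ j) \<phi> b)" for P j c \<phi>
    by (induction j) (simp_all add: pauli_op_scale)
  have pow_U: "U ((pauli_op Nq (V m) ^^ j) \<phi>) =
      (\<lambda>b. of_real (s m ^ j) * (pauli_op Nq (V m) ^^ j) (U \<phi>) b)" for j \<phi>
    by (induction j) (simp_all add: Suc.prems pauli_op_scale mult_ac)
  have "U (vpow Nq V k (Suc m) \<psi>) =
      (\<lambda>b. of_real (s m ^ k m) * (pauli_op Nq (V m) ^^ k m) (U (vpow Nq V k m \<psi>)) b)"
    by (simp add: pow_U)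
  also have "\<dots> = (\<lambda>b. of_real (s m ^ k m) * (of_real (mono_pow m s k) *
      (pauli_op Nq (V m) ^^ k m) (vpow Nq V k m (U \<psi>)) b))"
    using Suc by (simp add: pow_scale)
  finally show ?case
    by (simp add: mono_pow_Suc mult_ac)
qed

lemma supported_ket0: "supported Nq ket0"
  by (simp add: supported_def ket0_def)

lemma sq_norm_state_ket0: "sq_norm_state Nq ket0 = 1"
proof -
  have "sq_norm_state Nq ket0 = (\<Sum>b\<in>bstates Nq. if b = zero_bstate then 1 else 0)"
    unfolding sq_norm_state_def ket0_def by (intro sum.cong) auto
  then show ?thesis
    by (simp add: finite_bstates)
qed

lemma ket0_nonzero: "ket0 \<noteq> (\<lambda>_. 0)"
  by (auto simp: ket0_def fun_eq_iff)

lemma zop_ket0: "zop n ket0 = ket0"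
  by (auto simp: zop_def ket0_def zero_bstate_def)

lemma cnj_state_ket0: "cnj_state ket0 = ket0"
  by (auto simp: cnj_state_def ket0_def)

lemma pauli_op_nonzero:
  assumes "\<psi> \<noteq> (\<lambda>_. 0)"
  shows "pauli_op Nq P \<psi> \<noteq> (\<lambda>_. 0)"
proof
  assume "pauli_op Nq P \<psi> = (\<lambda>_. 0)"
  then have "\<psi> = pauli_op Nq P (\<lambda>_. 0)"
    by (metis pauli_op_pauli_op)
  with assms show False
    by (simp add: pauli_op_def)
qed

lemma vpow_invariant:
  assumes "\<And>i \<phi>. Q \<phi> \<Longrightarrow> Q (pauli_op Nq (V i) \<phi>)" and "Q \<psi>"
  shows "Q (vpow Nq V k m \<psi>)"
proof (induction m)
  case (Suc m)
  have "Q ((pauli_op Nq (V m) ^^ j) (vpow Nq V k m \<psi>))" for j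
    by (induction j) (simp_all add: Suc assms(1))
  then show ?case
    by simp
qed (simp add: assms(2))

lemma bit_sign_if_zop_eigenstate:
  assumes "zop n \<psi> = (\<lambda>b. of_real s * \<psi> b)" and "\<psi> b \<noteq> 0"
  shows "(if b n then -1 else 1) = s"
  using fun_cong[OF assms(1), of b] assms(2)
  by (auto simp: zop_def) (metis of_real_1 of_real_minus of_real_eq_iff)+

lemma common_zop_eigenstates_same_support:
  assumes supp: "supported Nq \<phi>" "supported Nq \<psi>"
    and Z: "\<And>n. n < Nq \<Longrightarrow> zop n \<phi> = (\<lambda>b. of_real (s n) * \<phi> b)"
      "\<And>n. n < Nq \<Longrightarrow> zop n \<psi> = (\<lambda>b. of_real (s n) * \<psi> b)"
    and nonzero: "\<phi> b \<noteq> 0" "\<psi> b' \<noteq> 0"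
  shows "b = b'"
proof
  fix n
  show "b n = b' n"
  proof (cases "n < Nq")
    case True
    then show ?thesis
      using bit_sign_if_zop_eigenstate[OF Z(1)[OF True] nonzero(1)]
        bit_sign_if_zop_eigenstate[OF Z(2)[OF True] nonzero(2)]
      by (auto split: if_splits)
  next
    case False
    have "b \<in> bstates Nq" "b' \<in> bstates Nq"
      using supp nonzero unfolding supported_def by blast+
    with False show ?thesis
      by (simp add: bstates_def)
  qed
qed

lemma real_multiple_if_same_symmetries:
  assumes supp: "supported Nq \<phi>" "supported Nq w" and w0: "w b0 \<noteq> 0"
    and Z: "\<And>n. n < Nq \<Longrightarrow> zop n \<phi> = (\<lambda>b. of_real (s n) * \<phi> b)"
      "\<And>n. n < Nq \<Longrightarrow> zop n w = (\<lambda>b. of_real (s n) * w b)"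
    and C: "cnj_state \<phi> = (\<lambda>b. of_real t * \<phi> b)" "cnj_state w = (\<lambda>b. of_real t * w b)"
  shows "\<exists>C::real. \<phi> = (\<lambda>b. of_real C * w b)"
proof -
  have \<phi>_single: "\<phi> b = 0" if "b \<noteq> b0" for b
    using common_zop_eigenstates_same_support[OF supp Z _ w0] that by blast
  have w_single: "w b = 0" if "b \<noteq> b0" for b
    using common_zop_eigenstates_same_support[OF supp(2,2) Z(2,2) _ w0] that by blast
  define r where "r = \<phi> b0 / w b0"
  have "cnj (w b0) = of_real t * w b0" "cnj (\<phi> b0) = of_real t * \<phi> b0"
    using C by (simp_all add: cnj_state_def fun_eq_iff)
  with w0 have "cnj r = r"
    by (auto simp: r_def)
  then have "Im r = 0"
    by (simp add: complex_eq_iff)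
  then have "of_real (Re r) = r"
    by (simp add: complex_eq_iff)
  then have "\<phi> b = of_real (Re r) * w b" for b
    using w0 \<phi>_single w_single by (cases "b = b0") (simp_all add: r_def)
  then show ?thesis
    by blast
qed

section \<open>Eigenvectors below the spectral gap\<close>

lemma supported_if_norm_eq:
  "(\<And>b. norm (\<phi> b) = norm (\<psi> b)) \<Longrightarrow> supported Nq \<psi> \<Longrightarrow> supported Nq \<phi>"
  unfolding supported_def by (metis norm_eq_zero)

text \<open>\<open>f\<close> is the identity for a unitary \<open>U\<close> and \<open>cnj\<close> for an antiunitary one.\<close>

lemma is_ground_state_transfer:
  assumes ground: "is_ground_state Nq H \<psi>"
    and U_H: "\<And>\<phi>. U (H \<phi>) = H' (U \<phi>)" and U_H': "\<And>\<phi>. U (H' \<phi>) = H (U \<phi>)"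
    and U_norm: "\<And>\<phi> b. norm (U \<phi> b) = norm (\<phi> b)"
    and U_scale: "\<And>\<mu> \<phi>. U (\<lambda>b. \<mu> * \<phi> b) = (\<lambda>b. f \<mu> * U \<phi> b)"
    and f_of_real: "\<And>x. f (of_real x) = of_real x" and Re_f: "\<And>\<mu>. Re (f \<mu>) = Re \<mu>"
  shows "is_ground_state Nq H' (U \<psi>)"
proof -
  obtain E where supp: "supported Nq \<psi>" and norm: "sq_norm_state Nq \<psi> = 1"
    and eig: "H \<psi> = (\<lambda>b. of_real E * \<psi> b)"
    and min: "\<And>\<mu> \<phi>. supported Nq \<phi> \<Longrightarrow> \<phi> \<noteq> (\<lambda>_. 0) \<Longrightarrow> H \<phi> = (\<lambda>b. \<mu> * \<phi> b) \<Longrightarrow> E \<le> Re \<mu>"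
    using ground unfolding is_ground_state_def by blast
  have "E \<le> Re \<mu>"
    if "supported Nq \<phi>" "\<phi> \<noteq> (\<lambda>_. 0)" "H' \<phi> = (\<lambda>b. \<mu> * \<phi> b)" for \<mu> \<phi>
  proof -
    have "H (U \<phi>) = (\<lambda>b. f \<mu> * U \<phi> b)"
      using U_H'[of \<phi>] U_scale[of \<mu> \<phi>] that(3) by simp
    moreover have "U \<phi> \<noteq> (\<lambda>_. 0)"
      using that(2) U_norm by (metis norm_eq_zero)
    moreover have "supported Nq (U \<phi>)"
      using supported_if_norm_eq[of "U \<phi>" \<phi>] U_norm that(1) by blast
    ultimately show ?thesis
      using min Re_f by metis
  qed
  moreover have "H' (U \<psi>) = (\<lambda>b. of_real E * U \<psi> b)"
    using U_H[of \<psi>] U_scale[of "of_real E" \<psi>] f_of_real[of E] eig by simp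
  moreover have "sq_norm_state Nq (U \<psi>) = 1"
    using norm by (simp add: sq_norm_state_def U_norm)
  moreover have "supported Nq (U \<psi>)"
    using supported_if_norm_eq[of "U \<psi>" \<psi>] U_norm supp by blast
  ultimately show ?thesis
    unfolding is_ground_state_def by blast
qed

lemma ground_states_same_energy:
  assumes "is_ground_state Nq H \<phi>" "is_ground_state Nq H \<psi>"
  obtains E where "H \<phi> = (\<lambda>b. of_real E * \<phi> b)" "H \<psi> = (\<lambda>b. of_real E * \<psi> b)"
proof -
  have nonzero: "\<phi>' \<noteq> (\<lambda>_. 0)" if "sq_norm_state Nq \<phi>' = 1" for \<phi>'
    using that by (auto simp: sq_norm_state_def)
  obtain E1 where eig1: "H \<phi> = (\<lambda>b. of_real E1 * \<phi> b)" and supp1: "supported Nq \<phi>"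
    and nz1: "\<phi> \<noteq> (\<lambda>_. 0)"
    and min1: "\<And>\<mu> \<phi>'. supported Nq \<phi>' \<and> \<phi>' \<noteq> (\<lambda>_. 0) \<and> H \<phi>' = (\<lambda>b. \<mu> * \<phi>' b) \<Longrightarrow> E1 \<le> Re \<mu>"
    using assms(1) nonzero unfolding is_ground_state_def by blast
  obtain E2 where eig2: "H \<psi> = (\<lambda>b. of_real E2 * \<psi> b)" and supp2: "supported Nq \<psi>"
    and nz2: "\<psi> \<noteq> (\<lambda>_. 0)"
    and min2: "\<And>\<mu> \<phi>'. supported Nq \<phi>' \<and> \<phi>' \<noteq> (\<lambda>_. 0) \<and> H \<phi>' = (\<lambda>b. \<mu> * \<phi>' b) \<Longrightarrow> E2 \<le> Re \<mu>"
    using assms(2) nonzero unfolding is_ground_state_def by blast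
  have "E1 = E2"
    using min1[of \<psi>] min2[of \<phi>] supp1 supp2 nz1 nz2 eig1 eig2 by fastforce
  then show ?thesis
    using that eig1 eig2 by blast
qed

lemma norm_le_1_if_sq_norm_state_eq_1:
  assumes "sq_norm_state Nq \<psi> = 1" "b \<in> bstates Nq"
  shows "norm (\<psi> b) \<le> 1"
proof -
  have "(norm (\<psi> b))\<^sup>2 \<le> sq_norm_state Nq \<psi>"
    unfolding sq_norm_state_def by (rule member_le_sum) (use assms finite_bstates in auto)
  then show ?thesis
    using assms(1) by (simp add: power_le_one_iff abs_square_le_1)
qed

lemma H0_energy_zero_bstate: "H0_energy Nq h zero_bstate = - (\<Sum>n<Nq. h n)"
  by (simp add: H0_energy_def zero_bstate_def)

lemma H0_energy_gap:
  assumes h: "\<forall>n<Nq. 0 < h n" and b: "b \<in> bstates Nq" "b n"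
  shows "H0_energy Nq h zero_bstate + 2 * h n \<le> H0_energy Nq h b"
proof -
  have n: "n < Nq"
    using b by (auto simp: bstates_def not_less[symmetric])
  have "H0_energy Nq h b - H0_energy Nq h zero_bstate = (\<Sum>m<Nq. if b m then 2 * h m else 0)"
    unfolding H0_energy_def zero_bstate_def by (simp add: sum_subtractf[symmetric]) (rule sum.cong; simp)
  also have "\<dots> \<ge> (if b n then 2 * h n else 0)"
    by (rule member_le_sum) (use h n in auto)
  finally show ?thesis
    using b(2) by simp
qed

lemma eigenvector_component_bound:
  assumes eig: "ham_op Nq Nc h V J \<psi> = (\<lambda>b. of_real E * \<psi> b)"
    and b: "b \<in> bstates Nq" and M: "\<forall>b'\<in>bstates Nq. norm (\<psi> b') \<le> M"
  shows "\<bar>H0_energy Nq h b - E\<bar> * norm (\<psi> b) \<le> (\<Sum>i<Nc. \<bar>J i\<bar>) * M"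
proof -
  have "of_real (H0_energy Nq h b - E) * \<psi> b = - (\<Sum>i<Nc. of_real (J i) * pauli_op Nq (V i) \<psi> b)"
    using fun_cong[OF eig, of b] unfolding ham_op_apply by (simp add: algebra_simps)
  then have "\<bar>H0_energy Nq h b - E\<bar> * norm (\<psi> b) = norm (\<Sum>i<Nc. of_real (J i) * pauli_op Nq (V i) \<psi> b)"
    by (metis norm_minus_cancel norm_mult norm_of_real)
  also have "\<dots> \<le> (\<Sum>i<Nc. \<bar>J i\<bar> * M)"
    by (rule order.trans[OF norm_sum sum_mono])
      (use b M in \<open>auto simp: norm_mult norm_pauli_op intro: mult_left_mono\<close>)
  finally show ?thesis
    by (simp add: sum_distrib_right)
qed

lemma eigenvector_vanishes_if_ground_component_vanishes:
  assumes h: "\<forall>n<Nq. 0 < h n"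
    and gap: "\<forall>n<Nq. E + (\<Sum>n<Nq. h n) + (\<Sum>i<Nc. \<bar>J i\<bar>) < 2 * h n"
    and eig: "ham_op Nq Nc h V J \<psi> = (\<lambda>b. of_real E * \<psi> b)"
    and zero: "\<psi> zero_bstate = 0" and b: "b \<in> bstates Nq"
  shows "\<psi> b = 0"
proof (rule ccontr)
  assume "\<psi> b \<noteq> 0"
  define M where "M = Max ((\<lambda>b. norm (\<psi> b)) ` bstates Nq)"
  have M: "\<forall>b\<in>bstates Nq. norm (\<psi> b) \<le> M"
    by (simp add: M_def finite_bstates)
  have "M \<in> (\<lambda>b. norm (\<psi> b)) ` bstates Nq"
    unfolding M_def by (rule Max_in) (use finite_bstates b in auto)
  then obtain bm where bm: "bm \<in> bstates Nq" "norm (\<psi> bm) = M"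
    by auto
  have "M > 0"
    using M b \<open>\<psi> b \<noteq> 0\<close> by (metis zero_less_norm_iff order.strict_trans2)
  then have "bm \<noteq> zero_bstate"
    using bm(2) zero by auto
  then obtain n where n: "bm n"
    by (auto simp: zero_bstate_def fun_eq_iff)
  then have "n < Nq"
    using bm(1) by (auto simp: bstates_def not_less[symmetric])
  have "\<bar>H0_energy Nq h bm - E\<bar> * M \<le> (\<Sum>i<Nc. \<bar>J i\<bar>) * M"
    using eigenvector_component_bound[OF eig bm(1) M] bm(2) by simp
  then have "H0_energy Nq h bm - E \<le> (\<Sum>i<Nc. \<bar>J i\<bar>)"
    using \<open>M > 0\<close> by simp
  moreover have "- (\<Sum>n<Nq. h n) + 2 * h n \<le> H0_energy Nq h bm"
    using H0_energy_gap[OF h bm(1) n] by (simp add: H0_energy_zero_bstate)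
  ultimately show False
    using gap \<open>n < Nq\<close> by fastforce
qed

lemma eigenvector_unique:
  assumes h: "\<forall>n<Nq. 0 < h n"
    and gap: "\<forall>n<Nq. E + (\<Sum>n<Nq. h n) + (\<Sum>i<Nc. \<bar>J i\<bar>) < 2 * h n"
    and eig1: "ham_op Nq Nc h V J \<phi>1 = (\<lambda>b. of_real E * \<phi>1 b)"
    and eig2: "ham_op Nq Nc h V J \<phi>2 = (\<lambda>b. of_real E * \<phi>2 b)"
    and supp: "supported Nq \<phi>1" "supported Nq \<phi>2"
    and norm: "sq_norm_state Nq \<phi>1 = 1" "sq_norm_state Nq \<phi>2 = 1"
    and pos1: "Im (\<phi>1 zero_bstate) = 0" "0 < Re (\<phi>1 zero_bstate)"
    and pos2: "Im (\<phi>2 zero_bstate) = 0" "0 < Re (\<phi>2 zero_bstate)"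
  shows "\<phi>1 = \<phi>2"
proof -
  define c where "c = Re (\<phi>1 zero_bstate) / Re (\<phi>2 zero_bstate)"
  have "c > 0"
    using pos1 pos2 by (simp add: c_def)
  have "of_real c * \<phi>2 zero_bstate = \<phi>1 zero_bstate"
    using pos1 pos2 by (simp add: c_def complex_eq_iff)
  then have "\<phi>1 b - of_real c * \<phi>2 b = 0" if "b \<in> bstates Nq" for b
    using eigenvector_vanishes_if_ground_component_vanishes[OF h gap _ _ that, of V "\<lambda>b. \<phi>1 b - of_real c * \<phi>2 b"]
    by (simp add: ham_op_diff ham_op_scale eig1 eig2 algebra_simps)
  then have scaled: "\<phi>1 = (\<lambda>b. of_real c * \<phi>2 b)"
    using supp unfolding supported_def by (metis eq_iff_diff_eq_0 mult_zero_right)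
  have "c\<^sup>2 = 1"
    using norm unfolding scaled sq_norm_state_def
    by (simp add: norm_mult power_mult_distrib sum_distrib_left[symmetric])
  then have "c = 1"
    using \<open>c > 0\<close> by (simp add: power2_eq_1_iff)
  with scaled show ?thesis
    by simp
qed

lemma eigenvalue_bound_from_ground_component:
  assumes eig: "ham_op Nq Nc h V J \<psi> = (\<lambda>b. of_real E * \<psi> b)"
    and norm: "sq_norm_state Nq \<psi> = 1"
    and a: "\<psi> zero_bstate = of_real a" "1/2 \<le> a"
  shows "E + (\<Sum>n<Nq. h n) \<le> 2 * (\<Sum>i<Nc. \<bar>J i\<bar>)"
proof -
  have "\<bar>H0_energy Nq h zero_bstate - E\<bar> = \<bar>E + (\<Sum>n<Nq. h n)\<bar>"
    by (simp add: H0_energy_zero_bstate abs_if)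
  then have bound: "\<bar>E + (\<Sum>n<Nq. h n)\<bar> * a \<le> (\<Sum>i<Nc. \<bar>J i\<bar>)"
    using eigenvector_component_bound[OF eig zero_bstate_in_bstates, of 1] a
      norm_le_1_if_sq_norm_state_eq_1[OF norm]
    by simp
  show ?thesis
  proof (cases "0 \<le> E + (\<Sum>n<Nq. h n)")
    case True
    have "(E + (\<Sum>n<Nq. h n)) * (1/2) \<le> (E + (\<Sum>n<Nq. h n)) * a"
      using a(2) True by (rule mult_left_mono)
    with bound True show ?thesis
      by simp
  next
    case False
    then show ?thesis
      by (smt (verit) sum_nonneg abs_ge_zero)
  qed
qed

section \<open>The perturbative ground state\<close>

locale perturbed_ground_state =
  fixes Nq Nc :: nat and h :: "nat \<Rightarrow> real" and V :: "nat \<Rightarrow> nat \<Rightarrow> pauli"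
    and E0 :: "(nat \<Rightarrow> real) \<Rightarrow> qstate" and \<Psi> :: "(nat \<Rightarrow> nat) \<Rightarrow> qstate"
    and \<epsilon> :: real
  assumes h_pos: "\<forall>n<Nq. h n > 0"
    and eps: "\<epsilon> > 0"
    and ground: "\<forall>J. (\<forall>i<Nc. \<bar>J i\<bar> < \<epsilon>) \<longrightarrow>
        is_ground_state Nq (ham_op Nq Nc h V J) (E0 J) \<and>
        Im (E0 J zero_bstate) = 0 \<and> Re (E0 J zero_bstate) > 0"
    and taylor: "\<forall>J. (\<forall>i<Nc. \<bar>J i\<bar> < \<epsilon>) \<longrightarrow>
        (\<forall>b. ((\<lambda>k. of_real (mono_pow Nc J k) * \<Psi> k b) has_sum E0 J b) (multi_indices Nc))"
begin

lemma E0_ground: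
  assumes "\<forall>i<Nc. \<bar>J i\<bar> < \<epsilon>"
  shows "is_ground_state Nq (ham_op Nq Nc h V J) (E0 J)"
    and "Im (E0 J zero_bstate) = 0" "0 < Re (E0 J zero_bstate)"
  using ground assms by blast+

lemma E0_has_sum:
  assumes "\<forall>i<Nc. \<bar>J i\<bar> < \<epsilon>"
  shows "((\<lambda>k. of_real (mono_pow Nc J k) * \<Psi> k b) has_sum E0 J b) (multi_indices Nc)"
  using taylor assms by blast

lemma E0_zero_coupling: "E0 (\<lambda>_. 0) = ket0"
proof -
  obtain E where supp: "supported Nq (E0 (\<lambda>_. 0))" and norm: "sq_norm_state Nq (E0 (\<lambda>_. 0)) = 1"
    and eig: "ham_op Nq Nc h V (\<lambda>_. 0) (E0 (\<lambda>_. 0)) = (\<lambda>b. of_real E * E0 (\<lambda>_. 0) b)"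
    and pos: "Im (E0 (\<lambda>_. 0) zero_bstate) = 0" "0 < Re (E0 (\<lambda>_. 0) zero_bstate)"
    using E0_ground[of "\<lambda>_. 0"] eps unfolding is_ground_state_def by force
  have "of_real (H0_energy Nq h zero_bstate) * E0 (\<lambda>_. 0) zero_bstate = of_real E * E0 (\<lambda>_. 0) zero_bstate"
    using fun_cong[OF eig, of zero_bstate] by (simp add: ham_op_apply)
  moreover have "E0 (\<lambda>_. 0) zero_bstate \<noteq> 0"
    using pos by auto
  ultimately have "H0_energy Nq h zero_bstate = E"
    by (metis mult_cancel_right of_real_eq_iff)
  then have E: "E = - (\<Sum>n<Nq. h n)"
    by (simp add: H0_energy_zero_bstate)
  have "ham_op Nq Nc h V (\<lambda>_. 0) ket0 = (\<lambda>b. of_real E * ket0 b)"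
    by (rule ext) (simp add: ham_op_apply ket0_def E H0_energy_zero_bstate)
  from eigenvector_unique[OF h_pos _ eig this supp supported_ket0 norm sq_norm_state_ket0 pos]
  show ?thesis
    using h_pos by (simp add: E ket0_def)
qed

lemma Psi_0_zero_bstate: "\<Psi> (\<lambda>_. 0) zero_bstate = 1"
proof -
  have "((\<lambda>k. of_real (mono_pow Nc (\<lambda>_. 0) k) * \<Psi> k zero_bstate) has_sum E0 (\<lambda>_. 0) zero_bstate)
      (multi_indices Nc)"
    using E0_has_sum[of "\<lambda>_. 0"] eps by simp
  from multi_powser_at_zero[OF this] show ?thesis
    by (simp add: E0_zero_coupling ket0_def)
qed

lemma E0_zero_bstate_ge_half:
  obtains \<delta> where "0 < \<delta>" "\<delta> \<le> \<epsilon>"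
    "\<And>J. \<forall>i<Nc. \<bar>J i\<bar> < \<delta> \<Longrightarrow> 1/2 \<le> Re (E0 J zero_bstate)"
proof -
  define \<rho> where "\<rho> = \<epsilon> / 2"
  define M where "M = (\<Sum>\<^sub>\<infinity>k\<in>multi_indices Nc. norm (of_real (mono_pow Nc (\<lambda>_. \<rho>) k) * \<Psi> k zero_bstate))"
  define q where "q = 1 / (2 * (M + 1))"
  have "0 < \<rho>" "\<rho> < \<epsilon>"
    using eps by (auto simp: \<rho>_def)
  have "0 \<le> M"
    unfolding M_def by (rule infsum_nonneg) simp
  then have q: "0 < q" "q \<le> 1" "q * M \<le> 1/2"
    by (auto simp: q_def field_simps)
  have summ: "(\<lambda>k. of_real (mono_pow Nc (\<lambda>_. \<rho>) k) * \<Psi> k zero_bstate) summable_on multi_indices Nc"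
    using E0_has_sum[of "\<lambda>_. \<rho>"] \<open>0 < \<rho>\<close> \<open>\<rho> < \<epsilon>\<close> has_sum_imp_summable by force
  show ?thesis
  proof
    show "0 < q * \<rho>" "q * \<rho> \<le> \<epsilon>"
      using q \<open>0 < \<rho>\<close> \<open>\<rho> < \<epsilon>\<close> by (auto intro: order.trans[OF mult_left_le_one_le])
    fix J :: "nat \<Rightarrow> real"
    assume J: "\<forall>i<Nc. \<bar>J i\<bar> < q * \<rho>"
    then have "\<forall>i<Nc. \<bar>J i\<bar> < \<epsilon>"
      using \<open>q * \<rho> \<le> \<epsilon>\<close> by fastforce
    from norm_multi_powser_sub_const_le[OF summ E0_has_sum[OF this]] J \<open>0 < \<rho>\<close> q
    have "norm (E0 J zero_bstate - 1) \<le> q * M"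
      by (simp add: M_def Psi_0_zero_bstate less_imp_le)
    then show "1/2 \<le> Re (E0 J zero_bstate)"
      using q(3) abs_Re_le_cmod[of "E0 J zero_bstate - 1"] by simp
  qed
qed

lemma E0_energy_below_gap:
  obtains \<delta> where "0 < \<delta>" "\<delta> \<le> \<epsilon>"
    "\<And>J E. \<forall>i<Nc. \<bar>J i\<bar> < \<delta> \<Longrightarrow> ham_op Nq Nc h V J (E0 J) = (\<lambda>b. of_real E * E0 J b) \<Longrightarrow>
       \<forall>n<Nq. E + (\<Sum>n<Nq. h n) + (\<Sum>i<Nc. \<bar>J i\<bar>) < 2 * h n"
proof -
  obtain \<delta>1 where \<delta>1: "0 < \<delta>1" "\<delta>1 \<le> \<epsilon>"
    and half: "\<And>J. \<forall>i<Nc. \<bar>J i\<bar> < \<delta>1 \<Longrightarrow> 1/2 \<le> Re (E0 J zero_bstate)"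
    using E0_zero_bstate_ge_half by blast
  define hmin where "hmin = Min (insert 1 (h ` {..<Nq}))"
  have hmin: "0 < hmin" "\<forall>n<Nq. hmin \<le> h n"
    using h_pos by (auto simp: hmin_def)
  define \<delta> where "\<delta> = min \<delta>1 (hmin / (2 * (Nc + 1)))"
  show ?thesis
  proof
    show "0 < \<delta>" "\<delta> \<le> \<epsilon>"
      using \<delta>1 hmin by (auto simp: \<delta>_def)
    fix J E
    assume J: "\<forall>i<Nc. \<bar>J i\<bar> < \<delta>" and eig: "ham_op Nq Nc h V J (E0 J) = (\<lambda>b. of_real E * E0 J b)"
    have "\<forall>i<Nc. \<bar>J i\<bar> < \<epsilon>"
      using J \<open>\<delta> \<le> \<epsilon>\<close> by fastforce
    then have "E0 J zero_bstate = of_real (Re (E0 J zero_bstate))" "sq_norm_state Nq (E0 J) = 1"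
      using E0_ground by (simp_all add: complex_eq_iff is_ground_state_def)
    moreover have "1/2 \<le> Re (E0 J zero_bstate)"
      using J half by (simp add: \<delta>_def)
    ultimately have E_le: "E + (\<Sum>n<Nq. h n) \<le> 2 * (\<Sum>i<Nc. \<bar>J i\<bar>)"
      using eigenvalue_bound_from_ground_component[OF eig] by blast
    have "(\<Sum>i<Nc. \<bar>J i\<bar>) \<le> Nc * \<delta>"
      using sum_bounded_above[of "{..<Nc}" "\<lambda>i. \<bar>J i\<bar>" \<delta>] J by fastforce
    also have "\<dots> \<le> (Nc + 1) * (hmin / (2 * (Nc + 1)))"
      using \<open>0 < \<delta>\<close> by (intro mult_mono) (auto simp: \<delta>_def)
    also have "\<dots> = hmin / 2"
      by (simp add: field_simps)
    finally have "(\<Sum>i<Nc. \<bar>J i\<bar>) \<le> hmin / 2" .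
    with E_le hmin show "\<forall>n<Nq. E + (\<Sum>n<Nq. h n) + (\<Sum>i<Nc. \<bar>J i\<bar>) < 2 * h n"
      by (auto intro: order.strict_trans2[of _ "2 * hmin"])
  qed
qed

lemma unique_ground_state_small_coupling:
  obtains \<delta> where "0 < \<delta>" "\<delta> \<le> \<epsilon>"
    "\<And>J \<phi>. \<forall>i<Nc. \<bar>J i\<bar> < \<delta> \<Longrightarrow> is_ground_state Nq (ham_op Nq Nc h V J) \<phi> \<Longrightarrow>
       Im (\<phi> zero_bstate) = 0 \<Longrightarrow> 0 < Re (\<phi> zero_bstate) \<Longrightarrow> \<phi> = E0 J"
proof -
  obtain \<delta> where \<delta>: "0 < \<delta>" "\<delta> \<le> \<epsilon>"
    and gap: "\<And>J E. \<forall>i<Nc. \<bar>J i\<bar> < \<delta> \<Longrightarrow> ham_op Nq Nc h V J (E0 J) = (\<lambda>b. of_real E * E0 J b) \<Longrightarrow>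
       \<forall>n<Nq. E + (\<Sum>n<Nq. h n) + (\<Sum>i<Nc. \<bar>J i\<bar>) < 2 * h n"
    using E0_energy_below_gap by blast
  show ?thesis
  proof (rule that[OF \<delta>])
    fix J \<phi>
    assume J: "\<forall>i<Nc. \<bar>J i\<bar> < \<delta>" and g: "is_ground_state Nq (ham_op Nq Nc h V J) \<phi>"
      and pos: "Im (\<phi> zero_bstate) = 0" "0 < Re (\<phi> zero_bstate)"
    have "\<forall>i<Nc. \<bar>J i\<bar> < \<epsilon>"
      using J \<delta> by fastforce
    note g0 = E0_ground(1)[OF this] and pos0 = E0_ground(2,3)[OF this]
    obtain E where eig: "ham_op Nq Nc h V J \<phi> = (\<lambda>b. of_real E * \<phi> b)"
      and eig0: "ham_op Nq Nc h V J (E0 J) = (\<lambda>b. of_real E * E0 J b)"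
      using ground_states_same_energy[OF g g0] by blast
    have "supported Nq \<phi>" "supported Nq (E0 J)" "sq_norm_state Nq \<phi> = 1" "sq_norm_state Nq (E0 J) = 1"
      using g g0 by (simp_all add: is_ground_state_def)
    then show "\<phi> = E0 J"
      using eigenvector_unique[OF h_pos gap[OF J eig0] eig eig0] pos pos0 by blast
  qed
qed

lemma E0_symmetry:
  assumes s: "\<And>i. \<bar>s i\<bar> = 1"
    and U_H: "\<And>J \<phi>. U (ham_op Nq Nc h V J \<phi>) = ham_op Nq Nc h V (\<lambda>i. s i * J i) (U \<phi>)"
    and U_norm: "\<And>\<phi> b. norm (U \<phi> b) = norm (\<phi> b)"
    and U_scale: "\<And>\<mu> \<phi>. U (\<lambda>b. \<mu> * \<phi> b) = (\<lambda>b. f \<mu> * U \<phi> b)"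
    and f_of_real: "\<And>x. f (of_real x) = of_real x" and Re_f: "\<And>\<mu>. Re (f \<mu>) = Re \<mu>"
    and U_zero: "\<And>\<phi>. Im (\<phi> zero_bstate) = 0 \<Longrightarrow> U \<phi> zero_bstate = \<phi> zero_bstate"
  obtains \<delta> where "0 < \<delta>" "\<delta> \<le> \<epsilon>"
    "\<And>J. \<forall>i<Nc. \<bar>J i\<bar> < \<delta> \<Longrightarrow> U (E0 J) = E0 (\<lambda>i. s i * J i)"
proof -
  obtain \<delta> where \<delta>: "0 < \<delta>" "\<delta> \<le> \<epsilon>" and unique:
    "\<And>J \<phi>. \<forall>i<Nc. \<bar>J i\<bar> < \<delta> \<Longrightarrow> is_ground_state Nq (ham_op Nq Nc h V J) \<phi> \<Longrightarrow>
       Im (\<phi> zero_bstate) = 0 \<Longrightarrow> 0 < Re (\<phi> zero_bstate) \<Longrightarrow> \<phi> = E0 J"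
    using unique_ground_state_small_coupling by blast
  have ss: "s i * (s i * x) = x" for i x
    using s[of i] by (metis abs_mult_self_eq mult.assoc mult_1)
  have "U (E0 J) = E0 (\<lambda>i. s i * J i)" if J: "\<forall>i<Nc. \<bar>J i\<bar> < \<delta>" for J
  proof (rule unique)
    show "\<forall>i<Nc. \<bar>s i * J i\<bar> < \<delta>"
      using J s by (simp add: abs_mult)
    have "\<forall>i<Nc. \<bar>J i\<bar> < \<epsilon>"
      using J \<delta> by fastforce
    note g = E0_ground(1)[OF this] and pos = E0_ground(2,3)[OF this]
    show "is_ground_state Nq (ham_op Nq Nc h V (\<lambda>i. s i * J i)) (U (E0 J))"
      by (rule is_ground_state_transfer[OF g U_H _ U_norm U_scale f_of_real Re_f])
        (use U_H[of "\<lambda>i. s i * J i"] in \<open>simp add: ss\<close>)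
    show "Im (U (E0 J) zero_bstate) = 0" "0 < Re (U (E0 J) zero_bstate)"
      using pos U_zero by simp_all
  qed
  with \<delta> show ?thesis
    using that by blast
qed

lemma expansion_coeff_symmetry:
  assumes \<delta>: "0 < \<delta>" "\<delta> \<le> \<epsilon>" and s: "\<And>i. \<bar>s i\<bar> = 1"
    and sym: "\<And>J. \<forall>i<Nc. \<bar>J i\<bar> < \<delta> \<Longrightarrow>
      ((\<lambda>k. of_real (mono_pow Nc J k) * c k) has_sum E0 (\<lambda>i. s i * J i) b) (multi_indices Nc)"
    and k: "k \<in> multi_indices Nc"
  shows "c k = of_real (mono_pow Nc s k) * \<Psi> k b"
proof (rule multi_powser_coeffs_unique[OF \<delta>(1) sym _ k])
  fix J :: "nat \<Rightarrow> real"
  assume "\<forall>i<Nc. \<bar>J i\<bar> < \<delta>"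
  then have "\<forall>i<Nc. \<bar>s i * J i\<bar> < \<epsilon>"
    using s \<delta>(2) by (fastforce simp: abs_mult)
  from E0_has_sum[OF this, of b] show "((\<lambda>k. of_real (mono_pow Nc J k) * (of_real (mono_pow Nc s k) * \<Psi> k b)) has_sum
      E0 (\<lambda>i. s i * J i) b) (multi_indices Nc)"
    by (simp add: mono_pow_mult mult_ac)
qed

lemma zop_Psi:
  assumes n: "n < Nq" and k: "k \<in> multi_indices Nc"
  shows "zop n (\<Psi> k) = (\<lambda>b. of_real (mono_pow Nc (\<lambda>i. Z_sign n (V i)) k) * \<Psi> k b)"
proof
  fix b
  obtain \<delta> where \<delta>: "0 < \<delta>" "\<delta> \<le> \<epsilon>"
    and sym: "\<And>J. \<forall>i<Nc. \<bar>J i\<bar> < \<delta> \<Longrightarrow> zop n (E0 J) = E0 (\<lambda>i. Z_sign n (V i) * J i)"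
    by (rule E0_symmetry[OF abs_Z_sign zop_ham_op[OF n] norm_zop zop_scale]) simp_all
  show "zop n (\<Psi> k) b = of_real (mono_pow Nc (\<lambda>i. Z_sign n (V i)) k) * \<Psi> k b"
  proof (rule expansion_coeff_symmetry[OF \<delta> _ _ k])
    fix J :: "nat \<Rightarrow> real"
    assume J: "\<forall>i<Nc. \<bar>J i\<bar> < \<delta>"
    then have "\<forall>i<Nc. \<bar>J i\<bar> < \<epsilon>"
      using \<delta> by fastforce
    define \<sigma> :: complex where "\<sigma> = (if b n then -1 else 1)"
    have zop_b: "zop n \<phi> b = \<sigma> * \<phi> b" for \<phi>
      by (simp add: zop_def \<sigma>_def)
    from has_sum_cmult_right[OF E0_has_sum[OF \<open>\<forall>i<Nc. \<bar>J i\<bar> < \<epsilon>\<close>, of b], of \<sigma>]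
    have "((\<lambda>k. of_real (mono_pow Nc J k) * zop n (\<Psi> k) b) has_sum zop n (E0 J) b) (multi_indices Nc)"
      by (simp only: zop_b mult.left_commute)
    then show "((\<lambda>k. of_real (mono_pow Nc J k) * zop n (\<Psi> k) b) has_sum
        E0 (\<lambda>i. Z_sign n (V i) * J i) b) (multi_indices Nc)"
      by (simp only: sym[OF J])
  qed simp
qed

lemma cnj_state_Psi:
  assumes k: "k \<in> multi_indices Nc"
  shows "cnj_state (\<Psi> k) = (\<lambda>b. of_real (mono_pow Nc (\<lambda>i. cnj_sign Nq (V i)) k) * \<Psi> k b)"
proof
  fix b
  obtain \<delta> where \<delta>: "0 < \<delta>" "\<delta> \<le> \<epsilon>"
    and sym: "\<And>J. \<forall>i<Nc. \<bar>J i\<bar> < \<delta> \<Longrightarrow> cnj_state (E0 J) = E0 (\<lambda>i. cnj_sign Nq (V i) * J i)"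
    by (rule E0_symmetry[OF abs_cnj_sign cnj_state_ham_op norm_cnj_state cnj_state_scale])
      (simp_all add: cnj_state_def complex_eq_iff)
  show "cnj_state (\<Psi> k) b = of_real (mono_pow Nc (\<lambda>i. cnj_sign Nq (V i)) k) * \<Psi> k b"
  proof (rule expansion_coeff_symmetry[OF \<delta> _ _ k])
    fix J :: "nat \<Rightarrow> real"
    assume J: "\<forall>i<Nc. \<bar>J i\<bar> < \<delta>"
    then have "\<forall>i<Nc. \<bar>J i\<bar> < \<epsilon>"
      using \<delta> by fastforce
    then have "((\<lambda>k. cnj (of_real (mono_pow Nc J k) * \<Psi> k b)) has_sum cnj (E0 J b)) (multi_indices Nc)"
      using E0_has_sum by (simp only: has_sum_cnj_iff)
    then show "((\<lambda>k. of_real (mono_pow Nc J k) * cnj_state (\<Psi> k) b) has_sum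
        E0 (\<lambda>i. cnj_sign Nq (V i) * J i) b) (multi_indices Nc)"
      using sym[OF J] by (simp add: cnj_state_def fun_eq_iff)
  qed simp
qed

lemma supported_Psi:
  assumes k: "k \<in> multi_indices Nc"
  shows "supported Nq (\<Psi> k)"
  unfolding supported_def
proof (intro allI impI)
  fix b
  assume b: "b \<notin> bstates Nq"
  have "\<forall>k\<in>multi_indices Nc. \<Psi> k b = 0"
  proof (rule multi_powser_coeffs_eq_0[OF eps])
    fix J :: "nat \<Rightarrow> real"
    assume "\<forall>i<Nc. \<bar>J i\<bar> < \<epsilon>"
    then have "supported Nq (E0 J)" "((\<lambda>k. of_real (mono_pow Nc J k) * \<Psi> k b) has_sum E0 J b) (multi_indices Nc)"
      using E0_ground(1) E0_has_sum unfolding is_ground_state_def by blast+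
    then show "((\<lambda>k. of_real (mono_pow Nc J k) * \<Psi> k b) has_sum 0) (multi_indices Nc)"
      using b by (simp add: supported_def)
  qed
  with k show "\<Psi> k b = 0"
    by blast
qed

end

theorem lemma1:
  fixes Nq Nc :: nat and h :: "nat \<Rightarrow> real" and V :: "nat \<Rightarrow> nat \<Rightarrow> pauli"
    and E0 :: "(nat \<Rightarrow> real) \<Rightarrow> qstate" and \<Psi> :: "(nat \<Rightarrow> nat) \<Rightarrow> qstate"
    and \<epsilon> :: real
  assumes h_pos: "\<forall>n<Nq. h n > 0"
    and eps: "\<epsilon> > 0"
    and ground: "\<forall>J. (\<forall>i<Nc. \<bar>J i\<bar> < \<epsilon>) \<longrightarrow>
        is_ground_state Nq (ham_op Nq Nc h V J) (E0 J) \<and>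
        Im (E0 J zero_bstate) = 0 \<and> Re (E0 J zero_bstate) > 0"
    and taylor: "\<forall>J. (\<forall>i<Nc. \<bar>J i\<bar> < \<epsilon>) \<longrightarrow>
        (\<forall>b. ((\<lambda>k. of_real (mono_pow Nc J k) * \<Psi> k b) has_sum E0 J b) (multi_indices Nc))"
  shows "\<forall>k\<in>multi_indices Nc. \<exists>C::real. \<Psi> k = (\<lambda>b. of_real C * vpow Nq V k Nc ket0 b)"
proof
  interpret perturbed_ground_state Nq Nc h V E0 \<Psi> \<epsilon>
    using assms by unfold_locales
  fix k
  assume k: "k \<in> multi_indices Nc"
  define w where "w = vpow Nq V k Nc ket0"
  have Z_w: "zop n w = (\<lambda>b. of_real (mono_pow Nc (\<lambda>i. Z_sign n (V i)) k) * w b)" if "n < Nq" for n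
    using vpow_intertwine[of Nc "zop n", OF zop_pauli_op[OF that] zop_scale]
    by (simp add: w_def zop_ket0)
  have cnj_w: "cnj_state w = (\<lambda>b. of_real (mono_pow Nc (\<lambda>i. cnj_sign Nq (V i)) k) * w b)"
    using vpow_intertwine[of Nc cnj_state, OF cnj_state_pauli_op] cnj_state_scale
    by (simp add: w_def cnj_state_ket0)
  have supp_w: "supported Nq w"
    unfolding w_def by (rule vpow_invariant[OF supported_pauli_op supported_ket0])
  have "w \<noteq> (\<lambda>_. 0)"
    unfolding w_def by (rule vpow_invariant[where Q = "\<lambda>\<psi>. \<psi> \<noteq> (\<lambda>_. 0)", OF pauli_op_nonzero ket0_nonzero])
  then obtain b0 where "w b0 \<noteq> 0"
    by auto
  from real_multiple_if_same_symmetries[OF supported_Psi[OF k] supp_w this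
      zop_Psi[OF _ k] Z_w cnj_state_Psi[OF k] cnj_w]
  show "\<exists>C::real. \<Psi> k = (\<lambda>b. of_real C * vpow Nq V k Nc ket0 b)"
    by (simp add: w_def)
qed


end
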